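(* Let $G$ be a finitely presented group with only finitely many conjugacy classes of finite subgroups, and let $G'$ be a group. If $G$ and $G'$ are $\mathrm{AE}$-equivalent, then there exists a morphism $\varphi:G\to G'$ that is injective on finite subgroups and maps any two non-conjugate finite subgroups of $G$ to non-conjugate finite subgroups of $G'$.
   Context: Two groups are $\mathrm{AE}$-equivalent if they satisfy the same first-order sentences (in the language of groups) of the form $\forall\bar x\exists\bar y\,\theta(\bar x,\bar y)$ with $\theta$ quantifier-free. *)

theory Defs
  imports "HOL-Algebra.Algebra"
begin

datatype gterm = GVar nat | GOne | GMul gterm gterm | GInv gterm

datatype gqf = GEq gterm gterm | GNeg gqf | GConj gqf gqf | GDisj gqf gqf

fun gterm_eval :: "('a, 'c) monoid_scheme \<Rightarrow> (nat \<Rightarrow> 'a) \<Rightarrow> gterm \<Rightarrow> 'a" where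
  "gterm_eval G e (GVar i) = e i"
| "gterm_eval G e GOne = \<one>\<^bsub>G\<^esub>"
| "gterm_eval G e (GMul s t) = gterm_eval G e s \<otimes>\<^bsub>G\<^esub> gterm_eval G e t"
| "gterm_eval G e (GInv t) = inv\<^bsub>G\<^esub> (gterm_eval G e t)"

fun gqf_sat :: "('a, 'c) monoid_scheme \<Rightarrow> (nat \<Rightarrow> 'a) \<Rightarrow> gqf \<Rightarrow> bool" where
  "gqf_sat G e (GEq s t) = (gterm_eval G e s = gterm_eval G e t)"
| "gqf_sat G e (GNeg \<phi>) = (\<not> gqf_sat G e \<phi>)"
| "gqf_sat G e (GConj \<phi> \<psi>) = (gqf_sat G e \<phi> \<and> gqf_sat G e \<psi>)"
| "gqf_sat G e (GDisj \<phi> \<psi>) = (gqf_sat G e \<phi> \<or> gqf_sat G e \<psi>)"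

text \<open>The AE-sentence given by n and a quantifier-free theta: the variables
  0..n-1 are universally quantified, all other variables occurring in theta are
  existentially quantified (every AE-sentence arises this way up to renaming).\<close>
definition ae_sat :: "('a, 'c) monoid_scheme \<Rightarrow> nat \<Rightarrow> gqf \<Rightarrow> bool" where
  "ae_sat G n \<theta> \<longleftrightarrow>
     (\<forall>e. (\<forall>i. e i \<in> carrier G) \<longrightarrow>
        (\<exists>e'. (\<forall>i. e' i \<in> carrier G) \<and> (\<forall>i<n. e' i = e i) \<and> gqf_sat G e' \<theta>))"

definition AE_equivalent :: "('a, 'c) monoid_scheme \<Rightarrow> ('b, 'd) monoid_scheme \<Rightarrow> bool" where
  "AE_equivalent G H \<longleftrightarrow> (\<forall>n \<theta>. ae_sat G n \<theta> = ae_sat H n \<theta>)"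

text \<open>Words over generators: a letter (i, b) is generator i (b = False) or its inverse (b = True).\<close>
type_synonym word = "(nat \<times> bool) list"

definition word_eval :: "('a, 'c) monoid_scheme \<Rightarrow> (nat \<Rightarrow> 'a) \<Rightarrow> word \<Rightarrow> 'a" where
  "word_eval G s w = foldr (\<lambda>(i, b) acc. (if b then inv\<^bsub>G\<^esub> (s i) else s i) \<otimes>\<^bsub>G\<^esub> acc) w \<one>\<^bsub>G\<^esub>"

text \<open>The congruence on words defining the group presented by generators and relators R
  (as a monoid: free cancellation and deletion of relators, in any context).\<close>
inductive word_equiv :: "word set \<Rightarrow> word \<Rightarrow> word \<Rightarrow> bool" for R where
  refl: "word_equiv R w w"
| sym: "word_equiv R u v \<Longrightarrow> word_equiv R v u"
| trans: "word_equiv R u v \<Longrightarrow> word_equiv R v w \<Longrightarrow> word_equiv R u w"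
| cancel: "word_equiv R (u @ [(i, b), (i, \<not> b)] @ v) (u @ v)"
| relator: "r \<in> R \<Longrightarrow> word_equiv R (u @ r @ v) (u @ v)"

definition finitely_presented :: "('a, 'c) monoid_scheme \<Rightarrow> bool" where
  "finitely_presented G \<longleftrightarrow>
     (\<exists>n s R. (\<forall>i<n. s i \<in> carrier G) \<and> generate G (s ` {..<n}) = carrier G \<and>
        finite R \<and> (\<forall>r\<in>R. \<forall>(i, b)\<in>set r. i < n) \<and>
        (\<forall>r\<in>R. word_eval G s r = \<one>\<^bsub>G\<^esub>) \<and>
        (\<forall>w. (\<forall>(i, b)\<in>set w. i < n) \<longrightarrow> word_eval G s w = \<one>\<^bsub>G\<^esub> \<longrightarrow> word_equiv R w []))"

definition finite_subgroups :: "('a, 'c) monoid_scheme \<Rightarrow> 'a set set" where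
  "finite_subgroups G = {H. subgroup H G \<and> finite H}"

definition conjugate_subgroups :: "('a, 'c) monoid_scheme \<Rightarrow> 'a set \<Rightarrow> 'a set \<Rightarrow> bool" where
  "conjugate_subgroups G H K \<longleftrightarrow>
     (\<exists>g\<in>carrier G. K = (\<lambda>h. g \<otimes>\<^bsub>G\<^esub> h \<otimes>\<^bsub>G\<^esub> inv\<^bsub>G\<^esub> g) ` H)"

definition finitely_many_conj_classes_finite_subgroups :: "('a, 'c) monoid_scheme \<Rightarrow> bool" where
  "finitely_many_conj_classes_finite_subgroups G \<longleftrightarrow>
     (\<exists>F. finite F \<and> F \<subseteq> finite_subgroups G \<and>
        (\<forall>H\<in>finite_subgroups G. \<exists>K\<in>F. conjugate_subgroups G K H))"

end

(* Fix a finite presentation of G with generators s 0, ..., s (n - 1) and a finite set F of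
   representatives of the conjugacy classes of finite subgroups, and write every element of a
   member of F as a word in the generators.  A quantifier-free formula Psi(x, z) says that the
   tuple x satisfies the relators, that the words of each member of F take pairwise distinct
   values at x, and that z conjugates the value set of no K in F onto that of a member of F not
   conjugate to K in G.  In G, x = s satisfies Psi for every z, so G fails the AE-sentence
   "for all x there is z with not Psi(x, z)", hence so does G'.  A witness x in G' satisfies the
   relators and thus induces a morphism G -> G' (von Dyck), which is injective on the members
   of F and separates their conjugacy classes; conjugating transfers both properties to all
   finite subgroups. *)

theory Submission
  imports Defs
begin

lemma word_eval_Nil [simp]: "word_eval G s [] = \<one>\<^bsub>G\<^esub>"
  by (simp add: word_eval_def)

lemma word_eval_Cons [simp]:
  "word_eval G s ((i, b) # w) = (if b then inv\<^bsub>G\<^esub> (s i) else s i) \<otimes>\<^bsub>G\<^esub> word_eval G s w"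
  by (simp add: word_eval_def)

lemma word_eval_cong:
  "(\<And>i b. (i, b) \<in> set w \<Longrightarrow> s i = t i) \<Longrightarrow> word_eval G s w = word_eval G t w"
  unfolding word_eval_def by (rule foldr_cong) auto

lemma (in group) word_eval_closed: "(\<And>i. s i \<in> carrier G) \<Longrightarrow> word_eval G s w \<in> carrier G"
  by (induction w) auto

lemma (in group) word_eval_append:
  "(\<And>i. s i \<in> carrier G) \<Longrightarrow> word_eval G s (u @ v) = word_eval G s u \<otimes> word_eval G s v"
  by (induction u) (auto simp: m_assoc word_eval_closed)

definition inverse_word :: "word \<Rightarrow> word" where
  "inverse_word w = rev (map (\<lambda>(i, b). (i, \<not> b)) w)"

lemma set_inverse_word: "set (inverse_word w) = (\<lambda>(i, b). (i, \<not> b)) ` set w"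
  by (simp add: inverse_word_def)

lemma (in group) word_eval_inverse_word:
  "(\<And>i. s i \<in> carrier G) \<Longrightarrow> word_eval G s (inverse_word w) = inv (word_eval G s w)"
  by (induction w) (auto simp: inverse_word_def word_eval_append word_eval_closed inv_mult_group)

lemma (in group) word_eval_word_equiv:
  assumes "word_equiv R u v" "\<And>i. s i \<in> carrier G" "\<And>r. r \<in> R \<Longrightarrow> word_eval G s r = \<one>"
  shows "word_eval G s u = word_eval G s v"
  using assms(1)
proof induction
  case (cancel u i b v)
  have "word_eval G s ([(i, b), (i, \<not> b)] @ v) = word_eval G s v"
    using assms(2) by (auto simp: m_assoc[symmetric] word_eval_closed)
  then show ?case using assms(2) by (simp only: word_eval_append)
next
  case (relator r u v)
  then show ?case using assms(2,3) by (simp add: word_eval_append word_eval_closed)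
qed auto

lemma (in group) generate_imp_word_eval:
  assumes "g \<in> generate G (s ` {..<n})" "\<And>i. s i \<in> carrier G"
  shows "\<exists>w. (\<forall>(i, b)\<in>set w. i < n) \<and> word_eval G s w = g"
  using assms(1)
proof induction
  case one
  show ?case by (intro exI[of _ "[]"]) auto
next
  case (incl h)
  then obtain i where "i < n" "h = s i" by auto
  then show ?case using assms(2) by (intro exI[of _ "[(i, False)]"]) auto
next
  case (inv h)
  then obtain i where "i < n" "h = s i" by auto
  then show ?case using assms(2) by (intro exI[of _ "[(i, True)]"]) auto
next
  case (eng h1 h2)
  then obtain w1 w2 where "\<forall>(i, b)\<in>set w1. i < n" "word_eval G s w1 = h1"
    "\<forall>(i, b)\<in>set w2. i < n" "word_eval G s w2 = h2" by blast
  then show ?case using assms(2) by (intro exI[of _ "w1 @ w2"]) (auto simp: word_eval_append)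
qed

definition list_of_set :: "'x set \<Rightarrow> 'x list" where
  "list_of_set A = (SOME xs. set xs = A)"

lemma set_list_of_set [simp]: "finite A \<Longrightarrow> set (list_of_set A) = A"
  unfolding list_of_set_def by (rule someI_ex) (rule finite_list)

definition term_of_word :: "word \<Rightarrow> gterm" where
  "term_of_word w = foldr (\<lambda>(i, b) t. GMul (if b then GInv (GVar i) else GVar i) t) w GOne"

lemma gterm_eval_term_of_word [simp]: "gterm_eval G e (term_of_word w) = word_eval G e w"
  by (induction w) (auto simp: term_of_word_def word_eval_def)

fun qf_all :: "gqf list \<Rightarrow> gqf" where
  "qf_all [] = GEq GOne GOne"
| "qf_all (\<phi> # \<phi>s) = GConj \<phi> (qf_all \<phi>s)"

fun qf_any :: "gqf list \<Rightarrow> gqf" where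
  "qf_any [] = GNeg (GEq GOne GOne)"
| "qf_any (\<phi> # \<phi>s) = GDisj \<phi> (qf_any \<phi>s)"

lemma gqf_sat_qf_all [simp]: "gqf_sat G e (qf_all \<phi>s) \<longleftrightarrow> (\<forall>\<phi>\<in>set \<phi>s. gqf_sat G e \<phi>)"
  by (induction \<phi>s) auto

lemma gqf_sat_qf_any [simp]: "gqf_sat G e (qf_any \<phi>s) \<longleftrightarrow> (\<exists>\<phi>\<in>set \<phi>s. gqf_sat G e \<phi>)"
  by (induction \<phi>s) auto

definition qf_inj_on :: "('x \<Rightarrow> gterm) \<Rightarrow> 'x list \<Rightarrow> gqf" where
  "qf_inj_on t xs = qf_all [GNeg (GEq (t x) (t y)). x \<leftarrow> xs, y \<leftarrow> xs, x \<noteq> y]"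

lemma gqf_sat_qf_inj_on [simp]:
  "gqf_sat G e (qf_inj_on t xs) \<longleftrightarrow> inj_on (\<lambda>x. gterm_eval G e (t x)) (set xs)"
  by (auto simp: qf_inj_on_def inj_on_def)

definition qf_same_values :: "gterm list \<Rightarrow> gterm list \<Rightarrow> gqf" where
  "qf_same_values ts us =
     GConj (qf_all [qf_any [GEq t u. u \<leftarrow> us]. t \<leftarrow> ts]) (qf_all [qf_any [GEq t u. t \<leftarrow> ts]. u \<leftarrow> us])"

lemma gqf_sat_qf_same_values [simp]:
  "gqf_sat G e (qf_same_values ts us) \<longleftrightarrow> gterm_eval G e ` set ts = gterm_eval G e ` set us"
  by (auto simp: qf_same_values_def) (metis imageI imageE)+

lemma not_ae_sat_GNeg_iff:
  "\<not> ae_sat G n (GNeg \<theta>) \<longleftrightarrow>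
     (\<exists>e. (\<forall>i. e i \<in> carrier G) \<and>
        (\<forall>e'. (\<forall>i. e' i \<in> carrier G) \<longrightarrow> (\<forall>i<n. e' i = e i) \<longrightarrow> gqf_sat G e' \<theta>))"
  unfolding ae_sat_def gqf_sat.simps by blast

lemma (in group) conjugate_subgroups_sym:
  assumes "K \<subseteq> carrier G" "conjugate_subgroups G K L"
  shows "conjugate_subgroups G L K"
proof -
  obtain g where g: "g \<in> carrier G" "L = (\<lambda>x. g \<otimes> x \<otimes> inv g) ` K"
    using assms(2) by (auto simp: conjugate_subgroups_def)
  have "(\<lambda>x. inv g \<otimes> x \<otimes> inv (inv g)) ` L = (\<lambda>x. x) ` K"
    unfolding g(2) image_image
    by (rule image_cong) (use g(1) subsetD[OF assms(1)] in \<open>auto simp: m_assoc inv_solve_left'\<close>)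
  then show ?thesis
    using g(1) unfolding conjugate_subgroups_def by (intro bexI[of _ "inv g"]) auto
qed

lemma (in group) conjugate_subgroups_trans:
  assumes "K \<subseteq> carrier G" "conjugate_subgroups G K L" "conjugate_subgroups G L M"
  shows "conjugate_subgroups G K M"
proof -
  obtain g where g: "g \<in> carrier G" "L = (\<lambda>x. g \<otimes> x \<otimes> inv g) ` K"
    using assms(2) by (auto simp: conjugate_subgroups_def)
  obtain k where k: "k \<in> carrier G" "M = (\<lambda>x. k \<otimes> x \<otimes> inv k) ` L"
    using assms(3) by (auto simp: conjugate_subgroups_def)
  have "M = (\<lambda>x. (k \<otimes> g) \<otimes> x \<otimes> inv (k \<otimes> g)) ` K"
    unfolding k(2) g(2) image_image
    by (rule image_cong) (use g(1) k(1) subsetD[OF assms(1)] in \<open>auto simp: m_assoc inv_mult_group\<close>)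
  then show ?thesis
    using g(1) k(1) unfolding conjugate_subgroups_def by blast
qed

lemma (in group_hom) conjugate_subgroups_image:
  assumes "K \<subseteq> carrier G" "conjugate_subgroups G K L"
  shows "conjugate_subgroups H (h ` K) (h ` L)"
proof -
  obtain g where g: "g \<in> carrier G" "L = (\<lambda>x. g \<otimes>\<^bsub>G\<^esub> x \<otimes>\<^bsub>G\<^esub> inv\<^bsub>G\<^esub> g) ` K"
    using assms(2) unfolding conjugate_subgroups_def by blast
  have "h ` L = (\<lambda>y. h g \<otimes>\<^bsub>H\<^esub> y \<otimes>\<^bsub>H\<^esub> inv\<^bsub>H\<^esub> h g) ` h ` K"
    unfolding g(2) image_image
    by (rule image_cong) (use g(1) subsetD[OF assms(1)] in simp_all)
  then show ?thesis
    using g(1) unfolding conjugate_subgroups_def by (intro bexI[of _ "h g"]) simp_all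
qed
lemma (in group_hom) inj_on_conjugate_subgroup:
  assumes "K \<subseteq> carrier G" "conjugate_subgroups G K L" "inj_on h K"
  shows "inj_on h L"
proof -
  obtain g where g: "g \<in> carrier G" "L = (\<lambda>x. g \<otimes>\<^bsub>G\<^esub> x \<otimes>\<^bsub>G\<^esub> inv\<^bsub>G\<^esub> g) ` K"
    using assms(2) unfolding conjugate_subgroups_def by blast
  have "inj_on (\<lambda>y. h g \<otimes>\<^bsub>H\<^esub> y \<otimes>\<^bsub>H\<^esub> inv\<^bsub>H\<^esub> h g) (h ` K)"
    using g(1) subsetD[OF assms(1)] by (intro inj_onI) auto
  then have "inj_on ((\<lambda>y. h g \<otimes>\<^bsub>H\<^esub> y \<otimes>\<^bsub>H\<^esub> inv\<^bsub>H\<^esub> h g) \<circ> h) K"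
    using assms(3) by (rule comp_inj_on[rotated])
  then have "inj_on (h \<circ> (\<lambda>x. g \<otimes>\<^bsub>G\<^esub> x \<otimes>\<^bsub>G\<^esub> inv\<^bsub>G\<^esub> g)) K"
    by (rule inj_on_cong[THEN iffD1, rotated]) (use g(1) subsetD[OF assms(1)] in simp)
  then show ?thesis
    unfolding g(2) by (rule inj_on_imageI)
qed

lemma (in group_hom) image_finite_subgroup:
  "K \<in> finite_subgroups G \<Longrightarrow> h ` K \<in> finite_subgroups H"
  by (simp add: finite_subgroups_def subgroup_img_is_subgroup)

lemma (in group_hom) separates_finite_subgroups_via_representatives:
  assumes F: "F \<subseteq> finite_subgroups G"
    and reps: "\<And>K. K \<in> finite_subgroups G \<Longrightarrow> \<exists>K0\<in>F. conjugate_subgroups G K0 K"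
    and inj: "\<And>K. K \<in> F \<Longrightarrow> inj_on h K"
    and sep: "\<And>K L. K \<in> F \<Longrightarrow> L \<in> F \<Longrightarrow> \<not> conjugate_subgroups G K L \<Longrightarrow>
                \<not> conjugate_subgroups H (h ` K) (h ` L)"
  shows "(\<forall>K\<in>finite_subgroups G. inj_on h K) \<and>
         (\<forall>K\<in>finite_subgroups G. \<forall>L\<in>finite_subgroups G. \<not> conjugate_subgroups G K L \<longrightarrow>
            h ` K \<in> finite_subgroups H \<and> h ` L \<in> finite_subgroups H \<and>
            \<not> conjugate_subgroups H (h ` K) (h ` L))"
proof -
  have sub: "K \<subseteq> carrier G" if "K \<in> finite_subgroups G" for K
    using that by (auto simp: finite_subgroups_def dest: subgroup.subset)
  have "inj_on h K" if K: "K \<in> finite_subgroups G" for K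
  proof -
    obtain K0 where "K0 \<in> F" "conjugate_subgroups G K0 K"
      using reps K by blast
    then show ?thesis
      using inj F sub inj_on_conjugate_subgroup by blast
  qed
  moreover have "\<not> conjugate_subgroups H (h ` K) (h ` L)"
    if K: "K \<in> finite_subgroups G" and L: "L \<in> finite_subgroups G"
      and KL: "\<not> conjugate_subgroups G K L" for K L
  proof
    assume hKL: "conjugate_subgroups H (h ` K) (h ` L)"
    obtain K0 L0 where K0: "K0 \<in> F" "conjugate_subgroups G K0 K"
      and L0: "L0 \<in> F" "conjugate_subgroups G L0 L"
      using reps K L by blast
    have K0_sub: "K0 \<subseteq> carrier G" and L0_sub: "L0 \<subseteq> carrier G"
      using K0 L0 F sub by blast+
    have "\<not> conjugate_subgroups G K0 L0"
    proof
      assume "conjugate_subgroups G K0 L0"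
      then have "conjugate_subgroups G K0 L"
        using G.conjugate_subgroups_trans K0_sub L0 by blast
      moreover have "conjugate_subgroups G K K0"
        using G.conjugate_subgroups_sym K0_sub K0 by blast
      ultimately show False
        using G.conjugate_subgroups_trans sub[OF K] KL by blast
    qed
    moreover have "conjugate_subgroups H (h ` K0) (h ` L0)"
    proof -
      have hK0_sub: "h ` K0 \<subseteq> carrier H"
        using K0_sub by auto
      have "conjugate_subgroups H (h ` K0) (h ` K)"
        using conjugate_subgroups_image K0_sub K0 by blast
      then have "conjugate_subgroups H (h ` K0) (h ` L)"
        using H.conjugate_subgroups_trans hK0_sub hKL by blast
      moreover have "conjugate_subgroups H (h ` L) (h ` L0)"
        using conjugate_subgroups_image[OF sub[OF L] G.conjugate_subgroups_sym[OF L0_sub L0(2)]] .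
      ultimately show ?thesis
        using H.conjugate_subgroups_trans hK0_sub by blast
    qed
    ultimately show False
      using sep K0 L0 by blast
  qed
  ultimately show ?thesis
    using image_finite_subgroup by blast
qed

text \<open>Generators are indexed by all naturals, only those below n mattering; asking all of them
  to lie in the carrier avoids side conditions on valuations.\<close>

locale presented_group = group G for G :: "('a, 'c) monoid_scheme" (structure) +
  fixes n :: nat and s :: "nat \<Rightarrow> 'a" and R :: "word set"
  assumes generator_closed: "s i \<in> carrier G"
    and generated: "generate G (s ` {..<n}) = carrier G"
    and relator_letters: "r \<in> R \<Longrightarrow> \<forall>(i, b)\<in>set r. i < n"
    and relator_trivial: "r \<in> R \<Longrightarrow> word_eval G s r = \<one>"
    and relators_complete:
      "\<forall>(i, b)\<in>set w. i < n \<Longrightarrow> word_eval G s w = \<one> \<Longrightarrow> word_equiv R w []"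

lemma finitely_presented_imp_presented_group:
  assumes "group G" "finitely_presented G"
  obtains n s R where "finite R" "presented_group G n s R"
proof -
  interpret group G by fact
  obtain n s R where closed: "\<forall>i<n. s i \<in> carrier G" and gen: "generate G (s ` {..<n}) = carrier G"
    and "finite R" and letters: "\<forall>r\<in>R. \<forall>(i, b)\<in>set r. i < n"
    and trivial: "\<forall>r\<in>R. word_eval G s r = \<one>\<^bsub>G\<^esub>"
    and complete: "\<forall>w. (\<forall>(i, b)\<in>set w. i < n) \<longrightarrow> word_eval G s w = \<one>\<^bsub>G\<^esub> \<longrightarrow> word_equiv R w []"
    using assms(2) unfolding finitely_presented_def by blast
  define s' where "s' i = (if i < n then s i else \<one>\<^bsub>G\<^esub>)" for i
  have eval_s': "word_eval G s' w = word_eval G s w" if "\<forall>(i, b)\<in>set w. i < n" for w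
    using that by (intro word_eval_cong) (auto simp: s'_def)
  have "s' ` {..<n} = s ` {..<n}"
    by (auto simp: s'_def)
  then have "presented_group G n s' R"
    using closed gen letters trivial complete eval_s'
    by unfold_locales (auto simp: s'_def)
  with \<open>finite R\<close> show thesis by (rule that)
qed

context presented_group
begin

definition word_of :: "'a \<Rightarrow> word" where
  "word_of g = (SOME w. (\<forall>(i, b)\<in>set w. i < n) \<and> word_eval G s w = g)"

lemma word_of:
  assumes "g \<in> carrier G"
  shows "\<forall>(i, b)\<in>set (word_of g). i < n" and "word_eval G s (word_of g) = g"
proof -
  have "\<exists>w. (\<forall>(i, b)\<in>set w. i < n) \<and> word_eval G s w = g"
    using generate_imp_word_eval generator_closed generated assms by blast
  then have "(\<forall>(i, b)\<in>set (word_of g). i < n) \<and> word_eval G s (word_of g) = g"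
    unfolding word_of_def by (rule someI_ex)
  then show "\<forall>(i, b)\<in>set (word_of g). i < n" and "word_eval G s (word_of g) = g"
    by auto
qed

definition induced_hom :: "('b, 'd) monoid_scheme \<Rightarrow> (nat \<Rightarrow> 'b) \<Rightarrow> 'a \<Rightarrow> 'b" where
  "induced_hom H e g = word_eval H e (word_of g)"

lemma induced_hom_cong:
  assumes "\<forall>i<n. e i = e' i" "g \<in> carrier G"
  shows "induced_hom H e g = induced_hom H e' g"
  using word_of(1)[OF assms(2)] assms(1) unfolding induced_hom_def
  by (intro word_eval_cong) auto

lemma induced_hom_generators:
  assumes "\<forall>i<n. e i = s i" "g \<in> carrier G"
  shows "induced_hom G e g = g"
proof -
  have "induced_hom G e g = induced_hom G s g"
    by (rule induced_hom_cong[OF assms])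
  then show ?thesis
    using word_of(2)[OF assms(2)] by (simp add: induced_hom_def)
qed

lemma induced_hom_word_eval:
  assumes "group H" "\<And>i. e i \<in> carrier H" "\<And>r. r \<in> R \<Longrightarrow> word_eval H e r = \<one>\<^bsub>H\<^esub>"
    and "\<forall>(i, b)\<in>set w. i < n"
  shows "induced_hom H e (word_eval G s w) = word_eval H e w"
proof -
  interpret H: group H by fact
  \<comment> \<open>u is a relation of G, hence a consequence of R, hence trivial in H\<close>
  define u where "u = word_of (word_eval G s w) @ inverse_word w"
  have w_closed: "word_eval G s w \<in> carrier G"
    by (simp add: word_eval_closed generator_closed)
  have "\<forall>(i, b)\<in>set u. i < n" and "word_eval G s u = \<one>"
    using word_of[OF w_closed] assms(4) generator_closed
    by (auto simp: u_def set_inverse_word word_eval_append word_eval_inverse_word word_eval_closed)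
  then have "word_equiv R u []"
    by (rule relators_complete)
  then have "word_eval H e u = \<one>\<^bsub>H\<^esub>"
    using H.word_eval_word_equiv assms(2,3) by fastforce
  then have "induced_hom H e (word_eval G s w) \<otimes>\<^bsub>H\<^esub> inv\<^bsub>H\<^esub> word_eval H e w = \<one>\<^bsub>H\<^esub>"
    using assms(2) by (simp add: u_def induced_hom_def H.word_eval_append H.word_eval_inverse_word)
  then show ?thesis
    using assms(2) by (simp add: induced_hom_def H.word_eval_closed H.inv_solve_right')
qed

lemma induced_hom_hom:
  assumes "group H" "\<And>i. e i \<in> carrier H" "\<And>r. r \<in> R \<Longrightarrow> word_eval H e r = \<one>\<^bsub>H\<^esub>"
  shows "induced_hom H e \<in> hom G H"
proof (rule homI)
  interpret H: group H by fact
  fix g assume "g \<in> carrier G"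
  show "induced_hom H e g \<in> carrier H"
    using assms(2) by (simp add: induced_hom_def H.word_eval_closed)
next
  fix x y assume xy: "x \<in> carrier G" "y \<in> carrier G"
  then have "x \<otimes> y = word_eval G s (word_of x @ word_of y)"
    using word_of generator_closed by (simp add: word_eval_append)
  moreover have "\<forall>(i, b)\<in>set (word_of x @ word_of y). i < n"
    using word_of xy by auto
  ultimately show "induced_hom H e (x \<otimes> y) = induced_hom H e x \<otimes>\<^bsub>H\<^esub> induced_hom H e y"
    using induced_hom_word_eval[OF assms] assms(2)
    by (simp add: group.word_eval_append[OF assms(1)] induced_hom_def)
qed

text \<open>The variables below n stand for the generators, GVar n for the conjugator z.\<close>

definition separating_formula :: "'a set set \<Rightarrow> gqf" where
  "separating_formula F =
     (let t = term_of_word \<circ> word_of;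
          conj_t = (\<lambda>g. GMul (GMul (GVar n) (t g)) (GInv (GVar n)))
      in GConj (qf_all [GEq (term_of_word r) GOne. r \<leftarrow> list_of_set R])
          (GConj (qf_all [qf_inj_on t (list_of_set K). K \<leftarrow> list_of_set F])
            (qf_all [GNeg (qf_same_values (map conj_t (list_of_set K)) (map t (list_of_set L))).
                     K \<leftarrow> list_of_set F, L \<leftarrow> list_of_set F, \<not> conjugate_subgroups G K L])))"

lemma gqf_sat_separating_formula:
  assumes "finite R" "finite F" "\<And>K. K \<in> F \<Longrightarrow> finite K"
  shows "gqf_sat H e (separating_formula F) \<longleftrightarrow>
     (\<forall>r\<in>R. word_eval H e r = \<one>\<^bsub>H\<^esub>) \<and> (\<forall>K\<in>F. inj_on (induced_hom H e) K) \<and>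
     (\<forall>K\<in>F. \<forall>L\<in>F. \<not> conjugate_subgroups G K L \<longrightarrow>
        (\<lambda>x. e n \<otimes>\<^bsub>H\<^esub> x \<otimes>\<^bsub>H\<^esub> inv\<^bsub>H\<^esub> e n) ` induced_hom H e ` K \<noteq> induced_hom H e ` L)"
  using assms by (auto simp: separating_formula_def Let_def induced_hom_def[abs_def] image_image)

lemma not_ae_sat_neg_separating_formula:
  assumes "finite R" "finite F" "F \<subseteq> finite_subgroups G"
  shows "\<not> ae_sat G n (GNeg (separating_formula F))"
proof -
  have F: "finite K" "K \<subseteq> carrier G" if "K \<in> F" for K
    using assms(3) that by (auto simp: finite_subgroups_def dest: subgroup.subset)
  have "gqf_sat G e (separating_formula F)"
    if e: "\<forall>i. e i \<in> carrier G" "\<forall>i<n. e i = s i" for e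
  proof -
    have fixed: "induced_hom G e ` K = K" and inj: "inj_on (induced_hom G e) K" if "K \<in> F" for K
      using induced_hom_generators[OF e(2)] F(2)[OF that] by (auto simp: inj_on_def subsetD)
    have "word_eval G e r = \<one>" if "r \<in> R" for r
      using word_eval_cong[of r e s G] relator_letters[OF that] relator_trivial[OF that] e(2) by auto
    moreover have "(\<lambda>x. e n \<otimes> x \<otimes> inv e n) ` K \<noteq> L"
      if "\<not> conjugate_subgroups G K L" for K L
      using that e(1) unfolding conjugate_subgroups_def by blast
    ultimately show ?thesis
      using assms(1,2) F fixed inj by (simp add: gqf_sat_separating_formula)
  qed
  then show ?thesis
    unfolding not_ae_sat_GNeg_iff using generator_closed by blast
qed

lemma not_ae_sat_neg_separating_formula_imp_hom:
  assumes "group H" "finite R" "finite F" "F \<subseteq> finite_subgroups G"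
    and "\<not> ae_sat H n (GNeg (separating_formula F))"
  obtains \<phi> where "\<phi> \<in> hom G H" "\<And>K. K \<in> F \<Longrightarrow> inj_on \<phi> K"
    "\<And>K L. K \<in> F \<Longrightarrow> L \<in> F \<Longrightarrow> \<not> conjugate_subgroups G K L \<Longrightarrow>
       \<not> conjugate_subgroups H (\<phi> ` K) (\<phi> ` L)"
proof -
  interpret H: group H by fact
  have F: "finite K" "K \<subseteq> carrier G" if "K \<in> F" for K
    using assms(4) that by (auto simp: finite_subgroups_def dest: subgroup.subset)
  obtain e where e: "\<forall>i. e i \<in> carrier H"
    and sat: "\<And>e'. \<forall>i. e' i \<in> carrier H \<Longrightarrow> \<forall>i<n. e' i = e i \<Longrightarrow>
                gqf_sat H e' (separating_formula F)"
    using assms(5) unfolding not_ae_sat_GNeg_iff by blast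
  note sat_iff = gqf_sat_separating_formula[OF assms(2,3) F(1)]
  have "gqf_sat H e (separating_formula F)"
    using sat e by blast
  then have relators: "\<And>r. r \<in> R \<Longrightarrow> word_eval H e r = \<one>\<^bsub>H\<^esub>"
    and inj: "\<And>K. K \<in> F \<Longrightarrow> inj_on (induced_hom H e) K"
    by (auto simp: sat_iff)
  have "\<not> conjugate_subgroups H (induced_hom H e ` K) (induced_hom H e ` L)"
    if KL: "K \<in> F" "L \<in> F" "\<not> conjugate_subgroups G K L" for K L
  proof
    assume "conjugate_subgroups H (induced_hom H e ` K) (induced_hom H e ` L)"
    then obtain z where z: "z \<in> carrier H"
      and conj: "induced_hom H e ` L = (\<lambda>x. z \<otimes>\<^bsub>H\<^esub> x \<otimes>\<^bsub>H\<^esub> inv\<^bsub>H\<^esub> z) ` induced_hom H e ` K"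
      unfolding conjugate_subgroups_def by blast
    have "gqf_sat H (e(n := z)) (separating_formula F)"
      using e z by (intro sat) auto
    moreover have "induced_hom H (e(n := z)) ` M = induced_hom H e ` M" if "M \<in> F" for M
      using induced_hom_cong[of "e(n := z)" e] F(2)[OF that] by (auto intro!: image_cong)
    ultimately show False
      using KL conj by (simp add: sat_iff) metis
  qed
  then show thesis
    using that induced_hom_hom[OF assms(1)] e relators inj by blast
qed

end

theorem lemma8p8:
  fixes G :: "('a, 'c) monoid_scheme" and G' :: "('b, 'd) monoid_scheme"
  assumes "group G" and "group G'"
    and "finitely_presented G"
    and "finitely_many_conj_classes_finite_subgroups G"
    and "AE_equivalent G G'"
  shows "\<exists>\<phi>\<in>hom G G'.
           (\<forall>H\<in>finite_subgroups G. inj_on \<phi> H) \<and>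
           (\<forall>H\<in>finite_subgroups G. \<forall>K\<in>finite_subgroups G.
              \<not> conjugate_subgroups G H K \<longrightarrow>
              \<phi> ` H \<in> finite_subgroups G' \<and> \<phi> ` K \<in> finite_subgroups G' \<and>
              \<not> conjugate_subgroups G' (\<phi> ` H) (\<phi> ` K))"
proof -
  obtain n s R where "finite R" and "presented_group G n s R"
    using finitely_presented_imp_presented_group assms(1,3) by blast
  then interpret presented_group G n s R by simp
  obtain F where "finite F" and F: "F \<subseteq> finite_subgroups G"
    and reps: "\<forall>K\<in>finite_subgroups G. \<exists>K0\<in>F. conjugate_subgroups G K0 K"
    using assms(4) unfolding finitely_many_conj_classes_finite_subgroups_def by blast
  have "\<not> ae_sat G n (GNeg (separating_formula F))"
    using not_ae_sat_neg_separating_formula \<open>finite R\<close> \<open>finite F\<close> F by blast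
  then have "\<not> ae_sat G' n (GNeg (separating_formula F))"
    using assms(5) unfolding AE_equivalent_def by blast
  then obtain \<phi> where \<phi>: "\<phi> \<in> hom G G'" and inj: "\<And>K. K \<in> F \<Longrightarrow> inj_on \<phi> K"
    and sep: "\<And>K L. K \<in> F \<Longrightarrow> L \<in> F \<Longrightarrow> \<not> conjugate_subgroups G K L \<Longrightarrow>
                \<not> conjugate_subgroups G' (\<phi> ` K) (\<phi> ` L)"
    using not_ae_sat_neg_separating_formula_imp_hom[OF assms(2) \<open>finite R\<close> \<open>finite F\<close> F] by blast
  interpret \<phi>: group_hom G G' \<phi>
    using assms(1,2) \<phi> by (simp add: group_hom_def group_hom_axioms_def)
  show ?thesis
    using \<phi>.separates_finite_subgroups_via_representatives[OF F _ inj sep] reps \<phi> by blast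
qed

end
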